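(* Let $n\in\mathbb N$ and consider the class of non-empty subsets of $\mathbb R^n$ with out-radius at most $1$. On this class, the map $K\mapsto K^c$ is continuous with respect to the Hausdorff metric.
   Context: $B(x,r)$ is the closed Euclidean ball and $B=B(0,1)$. For $A\subseteq\mathbb R^n$, $A^c=\bigcap_{x\in A}B(x,1)$. The out-radius of $A$ is the infimum of $R\ge0$ such that $A\subseteq B(z,R)$ for some $z$. The Hausdorff distance is $d_H(K,L)=\inf\{\lambda\ge0:K\subseteq L+\lambda B,\ L\subseteq K+\lambda B\}$. *)

theory Defs
  imports "HOL-Analysis.Analysis"
begin

definition cdual :: "'a::euclidean_space set \<Rightarrow> 'a set" where
  "cdual A = (\<Inter>x\<in>A. cball x 1)"

text \<open>Out-radius (infimum over the extended reals; it is \<infinity> for unbounded sets).\<close>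
definition outradius :: "'a::euclidean_space set \<Rightarrow> ereal" where
  "outradius A = Inf (ereal ` {R. R \<ge> 0 \<and> (\<exists>z. A \<subseteq> cball z R)})"

text \<open>Hausdorff distance as in the paper: infimum of admissible lambda, with
  K + lambda B written as the Minkowski sum with the closed ball of radius lambda.\<close>
definition dH :: "'a::euclidean_space set \<Rightarrow> 'a set \<Rightarrow> ereal" where
  "dH K L = Inf (ereal ` {r. r \<ge> 0 \<and>
      K \<subseteq> {x + y | x y. x \<in> L \<and> y \<in> cball 0 r} \<and>
      L \<subseteq> {x + y | x y. x \<in> K \<and> y \<in> cball 0 r}})"

end

(*
  If B lies in the r-neighbourhood of A, every x in A^c is within 1 + r of all
  points of B. Since the out-radius of B is attained, B has a centre w in B^c.
  Moving x towards w by the fraction t = e^2 / |x - w|^2, where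
  e^2 = (1 + r)^2 - 1 = 2r + r^2, lands in B^c: the convexity defect
  t (1 - t) |x - w|^2 of the squared norm absorbs exactly the excess e^2.
  The displacement is e^2 / |x - w| <= e, so
  d_H(A^c, B^c) <= sqrt (2 d_H(A, B) + d_H(A, B)^2).
*)
theory Submission
  imports Defs
begin

abbreviation thickening :: "'a::real_normed_vector set \<Rightarrow> real \<Rightarrow> 'a set" where
  "thickening A r \<equiv> {x + y | x y. x \<in> A \<and> y \<in> cball 0 r}"

lemma mem_thickening: "x \<in> thickening A r \<longleftrightarrow> (\<exists>a\<in>A. dist a x \<le> r)"
proof
  assume "\<exists>a\<in>A. dist a x \<le> r"
  then obtain a where "a \<in> A" "norm (x - a) \<le> r" by (auto simp: dist_norm norm_minus_commute)
  then show "x \<in> thickening A r" by (intro CollectI exI[of _ a] exI[of _ "x - a"]) auto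
qed (force simp: dist_norm)

lemma dH_less_ereal_imp_thickenings:
  assumes "dH K L < ereal \<delta>"
  obtains r where "0 \<le> r" "r < \<delta>" "K \<subseteq> thickening L r" "L \<subseteq> thickening K r"
  using assms unfolding dH_def Inf_less_iff by auto

lemma dH_le_ereal_if_thickenings:
  assumes "0 \<le> r" "K \<subseteq> thickening L r" "L \<subseteq> thickening K r"
  shows "dH K L \<le> ereal r"
  unfolding dH_def using assms by (intro Inf_lower) auto

lemma outradius_less_imp_cball:
  assumes "outradius A < ereal R"
  shows "\<exists>z. A \<subseteq> cball z R"
proof -
  obtain R' z where "R' < R" "A \<subseteq> cball z R'"
    using assms unfolding outradius_def Inf_less_iff by auto
  then show ?thesis using subset_cball[of R' R z] by auto
qed

lemma outradius_le_imp_cball: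
  fixes A :: "'a::euclidean_space set"
  assumes "outradius A \<le> ereal R"
  shows "\<exists>z. A \<subseteq> cball z R"
proof (cases "A = {}")
  case False
  define centres where "centres n = (\<Inter>a\<in>A. cball a (R + inverse (Suc n)))" for n :: nat
  have "\<Inter>(range centres) \<noteq> {}"
  proof (rule compact_nest)
    show "compact (centres n)" for n
      unfolding centres_def using False by (intro compact_Inter) auto
    show "centres n \<noteq> {}" for n
    proof -
      have "outradius A < ereal (R + inverse (Suc n))"
        using assms by (simp add: le_less_trans)
      then obtain z where "A \<subseteq> cball z (R + inverse (Suc n))"
        using outradius_less_imp_cball by blast
      then have "z \<in> centres n" unfolding centres_def by (auto simp: dist_commute)
      then show ?thesis by blast
    qed
    show "centres n \<subseteq> centres m" if "m \<le> n" for m n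
    proof -
      have "R + inverse (Suc n) \<le> R + inverse (Suc m)"
        using that by (simp add: le_imp_inverse_le)
      then show ?thesis unfolding centres_def using subset_cball by blast
    qed
  qed
  then obtain z where z: "\<And>n. z \<in> centres n" by blast
  have "dist z a \<le> R" if "a \<in> A" for a
  proof (rule LIMSEQ_le_const[OF LIMSEQ_inverse_real_of_nat_add])
    show "\<exists>N. \<forall>n\<ge>N. dist z a \<le> R + inverse (Suc n)"
      using z that unfolding centres_def by (auto simp: dist_commute)
  qed
  then have "A \<subseteq> cball z R" by auto
  then show ?thesis ..
qed simp

lemma norm_convex_combination_power2:
  fixes u v :: "'a::real_inner"
  shows "(norm ((1 - t) *\<^sub>R u + t *\<^sub>R v))^2
         = (1 - t) * (norm u)^2 + t * (norm v)^2 - t * (1 - t) * (norm (u - v))^2"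
  by (simp add: power2_norm_eq_inner inner_add_left inner_add_right inner_diff_left
      inner_diff_right inner_commute algebra_simps)

lemma exists_near_point_in_unit_cballs:
  fixes x w :: "'a::real_inner"
  assumes x: "\<forall>b\<in>B. dist x b \<le> 1 + r" and w: "\<forall>b\<in>B. dist w b \<le> 1" and "0 \<le> r"
  shows "\<exists>y. (\<forall>b\<in>B. dist y b \<le> 1) \<and> dist x y \<le> sqrt (2 * r + r^2)"
proof -
  define e where "e = sqrt (2 * r + r^2)"
  have e: "0 \<le> e" "e^2 = 2 * r + r^2"
    using \<open>0 \<le> r\<close> unfolding e_def by simp_all
  define d where "d = dist x w"
  show ?thesis
  proof (cases "d \<le> e")
    case True
    then show ?thesis using w unfolding d_def e_def by blast
  next
    case False
    then have "0 < d" "e^2 < d^2" using e(1) by (auto intro: power_strict_mono)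
    define t where "t = e^2 / d^2"
    have t: "0 \<le> t" "t \<le> 1" "t * d^2 = e^2"
      using \<open>0 < d\<close> \<open>e^2 < d^2\<close> unfolding t_def by auto
    define y where "y = (1 - t) *\<^sub>R x + t *\<^sub>R w"
    have "dist y b \<le> 1" if "b \<in> B" for b
    proof -
      have "(norm (y - b))^2
          = (1 - t) * (norm (x - b))^2 + t * (norm (w - b))^2 - t * (1 - t) * d^2"
        using norm_convex_combination_power2[of t "x - b" "w - b"]
        unfolding y_def d_def dist_norm by (simp add: algebra_simps)
      also have "\<dots> \<le> (1 - t) * (1 + r)^2 + t * 1 - t * (1 - t) * d^2"
      proof -
        have "(norm (x - b))^2 \<le> (1 + r)^2" "(norm (w - b))^2 \<le> 1"
          using x w that by (auto simp: dist_norm intro: power_mono power_le_one)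
        then show ?thesis using t by (intro diff_right_mono add_mono mult_left_mono) auto
      qed
      also have "\<dots> = 1"
        using t(3) e(2) by (simp add: algebra_simps power2_eq_square)
      finally show ?thesis by (simp add: dist_norm power_le_one_iff)
    qed
    moreover have "dist x y \<le> e"
    proof -
      have "x - y = t *\<^sub>R (x - w)"
        unfolding y_def by (simp add: algebra_simps)
      then have "dist x y = t * d"
        using t(1) by (simp add: dist_norm d_def)
      also have "\<dots> = e^2 / d"
        using \<open>0 < d\<close> unfolding t_def by (simp add: power2_eq_square)
      also have "\<dots> \<le> e"
        using False e(1) by (simp add: divide_le_eq power2_eq_square mult_left_mono)
      finally show ?thesis .
    qed
    ultimately show ?thesis unfolding e_def by blast
  qed
qed

lemma cdual_subset_thickening:
  fixes A B :: "'a::euclidean_space set"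
  assumes B: "B \<subseteq> thickening A r" and z: "B \<subseteq> cball z 1" and "0 \<le> r"
  shows "cdual A \<subseteq> thickening (cdual B) (sqrt (2 * r + r^2))"
proof
  fix x assume x: "x \<in> cdual A"
  have "dist x b \<le> 1 + r" if "b \<in> B" for b
  proof -
    have "b \<in> thickening A r"
      using B that by (rule subsetD)
    then obtain a where "a \<in> A" "dist a b \<le> r"
      unfolding mem_thickening by blast
    moreover have "dist a x \<le> 1"
      using x \<open>a \<in> A\<close> unfolding cdual_def by auto
    ultimately show ?thesis
      using dist_triangle[of x b a] by (simp add: dist_commute)
  qed
  moreover have "\<forall>b\<in>B. dist z b \<le> 1"
    using z by auto
  ultimately obtain y where "\<forall>b\<in>B. dist y b \<le> 1" "dist x y \<le> sqrt (2 * r + r^2)"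
    using exists_near_point_in_unit_cballs \<open>0 \<le> r\<close> by blast
  moreover from this(1) have "y \<in> cdual B"
    unfolding cdual_def by (auto simp: dist_commute)
  ultimately show "x \<in> thickening (cdual B) (sqrt (2 * r + r^2))"
    unfolding mem_thickening by (auto simp: dist_commute)
qed

theorem corollary2p10:
  fixes C :: "(real ^ 'n) set set"
  defines "C \<equiv> {A. A \<noteq> {} \<and> outradius A \<le> 1}"
  shows "\<forall>A\<in>C. \<forall>\<epsilon>>0. \<exists>\<delta>>0. \<forall>B\<in>C.
           dH A B < ereal \<delta> \<longrightarrow> dH (cdual A) (cdual B) < ereal \<epsilon>"
proof (intro ballI allI impI)
  fix A and \<epsilon> :: real
  assume "A \<in> C" "\<epsilon> > 0"
  define \<delta> where "\<delta> = min 1 (\<epsilon>^2 / 3)"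
  have "dH (cdual A) (cdual B) < ereal \<epsilon>" if "B \<in> C" "dH A B < ereal \<delta>" for B
  proof -
    obtain r where r: "0 \<le> r" "r < \<delta>" "A \<subseteq> thickening B r" "B \<subseteq> thickening A r"
      using dH_less_ereal_imp_thickenings \<open>dH A B < ereal \<delta>\<close> by blast
    obtain za zb where "A \<subseteq> cball za 1" "B \<subseteq> cball zb 1"
      using outradius_le_imp_cball[of A 1] outradius_le_imp_cball[of B 1] \<open>A \<in> C\<close> \<open>B \<in> C\<close>
      unfolding C_def one_ereal_def by auto
    then have "dH (cdual A) (cdual B) \<le> ereal (sqrt (2 * r + r^2))"
      using r by (intro dH_le_ereal_if_thickenings cdual_subset_thickening) auto
    also have "sqrt (2 * r + r^2) < \<epsilon>"
    proof -
      have "r^2 \<le> r"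
        using r unfolding \<delta>_def by (simp add: power2_eq_square mult_left_le)
      then have "2 * r + r^2 < \<epsilon>^2"
        using r unfolding \<delta>_def by simp
      then show ?thesis
        using \<open>\<epsilon> > 0\<close> real_less_lsqrt by simp
    qed
    finally show ?thesis by simp
  qed
  moreover have "\<delta> > 0"
    using \<open>\<epsilon> > 0\<close> unfolding \<delta>_def by simp
  ultimately show "\<exists>\<delta>>0. \<forall>B\<in>C. dH A B < ereal \<delta> \<longrightarrow> dH (cdual A) (cdual B) < ereal \<epsilon>"
    by blast
qed

end
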